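(* Let $G:\mathbb{R}\to\mathbb{R}$ satisfy: $G\ge 0$ and $\mathrm{supp}(G)=\mathbb{R}$; $G\in W^{1,1}(\mathbb{R})\cap L^\infty(\mathbb{R})\cap C^2(\mathbb{R})$; $G(x)=g(|x|)$ with $g'(r)<0$ for all $r>0$, $g''(0)<0$, $\lim_{r\to+\infty}g(r)=0$; and $\int G=1$. For $L>0$ let $X_L=\{f\in C^1([0,L]):f(0)=0\}$ with norm $\|f\|_{L^\infty}+\|f'\|_{L^\infty}$ and let $\mathcal{H}_L:X_L\to X_L$ be $$\mathcal{H}_L[u](x)=\int_0^L\big(G(x-y)-G(x+y)\big)u(y)\,dy.$$ Let $\varepsilon(L)$ be the simple eigenvalue of $\mathcal{H}_L$ equal to its spectral radius, which has an eigenfunction $u\ge0$ (equivalently, the number $\varepsilon(L)>0$ for which there is a symmetric $\rho\in C^2([-L,L])$ of unit mass with $\rho'\le0$ on $[0,L]$ solving $\varepsilon(L)\rho(x)=\int_{-L}^LG(x-y)\rho(y)\,dy+C$ on $[-L,L]$, with $u=-\rho'$). Then $\varepsilon(L)$ is uniquely determined as a function of $L$, and: (i) $\varepsilon(L)$ is strictly increasing in $L$; (ii) $\lim_{L\to+\infty}\varepsilon(L)=1$; (iii) $\varepsilon(0)=0$, where for $L=0$ the operator $\mathcal{H}_0$ is the zero operator.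
   Context: Eigenvalue equation: $\varepsilon u=\mathcal{H}_L[u]$. *)

theory Defs
  imports "HOL-Analysis.Analysis"
begin

definition C1_on_interval :: "real \<Rightarrow> (real \<Rightarrow> real) \<Rightarrow> bool" where
  "C1_on_interval L f \<longleftrightarrow>
     (\<exists>D. (\<forall>x\<in>{0..L}. (f has_real_derivative D x) (at x within {0..L}))
          \<and> continuous_on {0..L} D)"

definition X_space :: "real \<Rightarrow> (real \<Rightarrow> real) set" where
  "X_space L = {f. C1_on_interval L f \<and> f 0 = 0}"

definition H_op :: "(real \<Rightarrow> real) \<Rightarrow> real \<Rightarrow> (real \<Rightarrow> real) \<Rightarrow> real \<Rightarrow> real" where
  "H_op G L u x = integral {0..L} (\<lambda>y. (G (x - y) - G (x + y)) * u y)"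

definition pos_eigenvalue :: "(real \<Rightarrow> real) \<Rightarrow> real \<Rightarrow> real \<Rightarrow> bool" where
  "pos_eigenvalue G L e \<longleftrightarrow>
     (\<exists>u. u \<in> X_space L \<and> (\<forall>x\<in>{0..L}. u x \<ge> 0) \<and> (\<exists>x\<in>{0..L}. u x \<noteq> 0)
          \<and> (\<forall>x\<in>{0..L}. e * u x = H_op G L u x))"

text \<open>epsilon(L); for L = 0 the operator is zero and epsilon(0) is its spectral radius 0.\<close>
definition eps :: "(real \<Rightarrow> real) \<Rightarrow> real \<Rightarrow> real" where
  "eps G L = (if L = 0 then 0 else (THE e. pos_eigenvalue G L e))"

end

theory Submission
  imports Defs
begin

text \<open>
  The kernel \<open>K(x,y) = G(x - y) - G(x + y)\<close> of \<open>\<H>\<^sub>L\<close> is symmetric and, on \<open>[0,L]\<^sup>2\<close>,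
  comparable to \<open>xy\<close>: \<open>m x y \<le> K(x,y) \<le> M x y\<close> (the lower bound uses \<open>G''(0) < 0\<close> and
  \<open>G' < 0\<close> on \<open>(0,\<infinity>)\<close>). This comparability makes \<open>\<H>\<^sub>L\<close> a Birkhoff contraction on
  nonnegative functions, so the power iteration started at \<open>u\<^sub>0(x) = x\<close> converges to a positive
  eigenfunction. Pairing two positive eigenfunctions in \<open>L\<^sup>2\<close> and using the symmetry of \<open>K\<close>
  shows that the eigenvalue is unique, and that enlarging \<open>L\<close> strictly increases it.
  Finally \<open>\<H>\<^sub>L[1] \<le> \<integral>G = 1\<close> gives \<open>\<epsilon>(L) \<le> 1\<close>, while the growth of \<open>\<integral> \<H>\<^sub>L\<^sup>n[1]\<close> gives the
  Rayleigh-type bound \<open>\<epsilon>(L) \<ge> L\<^sup>-\<^sup>1 \<integral>\<^sub>0\<^sup>L \<H>\<^sub>L[1]\<close>, which tends to 1 because \<open>G\<close> has unit mass.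
\<close>

lemma DERIV_lower_bound_diff:
  fixes f f' :: "real \<Rightarrow> real"
  assumes "a \<le> b" and "\<And>x. a \<le> x \<Longrightarrow> x \<le> b \<Longrightarrow> (f has_real_derivative f' x) (at x)"
    and "\<And>x. a \<le> x \<Longrightarrow> x \<le> b \<Longrightarrow> C \<le> f' x"
  shows "(b - a) * C \<le> f b - f a"
proof -
  have "f a - C * a \<le> f b - C * b"
  proof (rule DERIV_nonneg_imp_nondecreasing[OF assms(1)])
    fix x assume "a \<le> x" "x \<le> b"
    then show "\<exists>y. ((\<lambda>x. f x - C * x) has_real_derivative y) (at x) \<and> 0 \<le> y"
      using assms(2,3) by (intro exI[of _ "f' x - C"]) (auto intro!: derivative_eq_intros)
  qed
  then show ?thesis by (simp add: algebra_simps)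
qed

lemma DERIV_upper_bound_diff:
  fixes f f' :: "real \<Rightarrow> real"
  assumes "a \<le> b" and "\<And>x. a \<le> x \<Longrightarrow> x \<le> b \<Longrightarrow> (f has_real_derivative f' x) (at x)"
    and "\<And>x. a \<le> x \<Longrightarrow> x \<le> b \<Longrightarrow> f' x \<le> C"
  shows "f b - f a \<le> (b - a) * C"
proof -
  have "(b - a) * (- C) \<le> - f b - - f a"
    by (rule DERIV_lower_bound_diff[of a b _ "\<lambda>x. - f' x"]) (use assms in \<open>auto intro!: derivative_eq_intros\<close>)
  then show ?thesis by simp
qed

lemma integral_pos_continuous:
  fixes f :: "real \<Rightarrow> real"
  assumes "continuous_on {a..b} f" and "\<And>x. x \<in> {a..b} \<Longrightarrow> 0 \<le> f x"
    and "x0 \<in> {a..b}" and "0 < f x0" and "a < b"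
  shows "0 < integral {a..b} f"
  using integral_nonneg[OF integrable_continuous_interval[OF assms(1)] assms(2)]
    integral_eq_0_iff[OF assms(1,5,2)] assms(3,4) by force

lemma power2_integral_le:
  fixes f :: "real \<Rightarrow> real"
  assumes f: "continuous_on {a..b} f" and ab: "a \<le> b"
  shows "(integral {a..b} f)\<^sup>2 \<le> (b - a) * integral {a..b} (\<lambda>x. (f x)\<^sup>2)"
proof (cases "a = b")
  case False
  define c where "c = integral {a..b} f / (b - a)"
  have int: "(\<lambda>x. (f x)\<^sup>2) integrable_on {a..b}" "(\<lambda>x. 2 * c * f x) integrable_on {a..b}"
    "(\<lambda>x. c\<^sup>2) integrable_on {a..b}"
    using f by (auto intro!: integrable_continuous_interval continuous_intros)
  have "0 \<le> integral {a..b} (\<lambda>x. (f x - c)\<^sup>2)"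
    by (rule integral_nonneg) (use f in \<open>auto intro!: integrable_continuous_interval continuous_intros\<close>)
  also have "\<dots> = integral {a..b} (\<lambda>x. ((f x)\<^sup>2 - 2 * c * f x) + c\<^sup>2)"
    by (simp add: power2_diff algebra_simps)
  also have "\<dots> = integral {a..b} (\<lambda>x. (f x)\<^sup>2) - integral {a..b} (\<lambda>x. 2 * c * f x) + c\<^sup>2 * (b - a)"
    using int ab by (simp add: integral_add integral_diff integrable_diff)
  also have "\<dots> = integral {a..b} (\<lambda>x. (f x)\<^sup>2) - 2 * c * integral {a..b} f + c\<^sup>2 * (b - a)"
    by simp
  also have "\<dots> = integral {a..b} (\<lambda>x. (f x)\<^sup>2) - (integral {a..b} f)\<^sup>2 / (b - a)"
  proof -
    have "2 * (I / d) * I - (I / d)\<^sup>2 * d = I\<^sup>2 / d" if "d > 0" for I d :: real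
      using that by (simp add: field_simps power2_eq_square)
    then show ?thesis using False ab unfolding c_def by (smt (verit))
  qed
  finally show ?thesis using False ab by (simp add: field_simps)
qed simp

lemma uniformly_convergent_geometric_steps:
  fixes v :: "nat \<Rightarrow> 'a \<Rightarrow> real"
  assumes steps: "\<And>n x. x \<in> A \<Longrightarrow> \<bar>v (Suc n) x - v n x\<bar> \<le> C * q ^ n"
    and q: "0 \<le> q" "q < 1"
  shows "uniformly_convergent_on A v"
proof -
  have "uniform_limit A (\<lambda>n x. \<Sum>i<n. v (Suc i) x - v i x) (\<lambda>x. \<Sum>i. v (Suc i) x - v i x) sequentially"
    by (rule Weierstrass_m_test[where M = "\<lambda>n. C * q ^ n"]) (use steps q in auto)
  then have "uniform_limit A (\<lambda>n x. v 0 x + (\<Sum>i<n. v (Suc i) x - v i x))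
      (\<lambda>x. v 0 x + (\<Sum>i. v (Suc i) x - v i x)) sequentially"
    by (intro uniform_limit_intros)
  moreover have "v 0 x + (\<Sum>i<n. v (Suc i) x - v i x) = v n x" for n x
    by (induction n) auto
  ultimately show ?thesis
    unfolding uniformly_convergent_on_def by auto
qed

lemma continuous_on_reflected_difference_times:
  fixes \<phi> f :: "real \<Rightarrow> real"
  assumes "continuous_on UNIV \<phi>" and "continuous_on {0..L} f"
  shows "continuous_on (A \<times> {0..L}) (\<lambda>(x, t). (\<phi> (x - t) - \<phi> (x + t)) * f t)"
  unfolding split_beta
  by (intro continuous_intros continuous_on_compose2[OF assms(1)] continuous_on_compose2[OF assms(2)]) auto

lemma C1_on_interval_imp_continuous_on: "C1_on_interval L f \<Longrightarrow> continuous_on {0..L} f"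
  unfolding C1_on_interval_def continuous_on_eq_continuous_within
  using DERIV_continuous by blast

lemma C1_on_interval_cong:
  assumes "C1_on_interval L f" and "\<And>x. x \<in> {0..L} \<Longrightarrow> f x = g x"
  shows "C1_on_interval L g"
  using assms has_field_derivative_transform_within[OF _ zero_less_one]
  unfolding C1_on_interval_def by metis

lemma C1_on_interval_cdivide:
  assumes "C1_on_interval L f"
  shows "C1_on_interval L (\<lambda>x. f x / c)"
proof -
  obtain D where D: "\<forall>x\<in>{0..L}. (f has_real_derivative D x) (at x within {0..L})" "continuous_on {0..L} D"
    using assms unfolding C1_on_interval_def by blast
  show ?thesis
    unfolding C1_on_interval_def
  proof (intro exI[of _ "\<lambda>x. D x / c"] conjI ballI)
    fix x assume "x \<in> {0..L}"
    then show "((\<lambda>x. f x / c) has_real_derivative D x / c) (at x within {0..L})"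
      using D(1) by (blast intro: DERIV_cdivide)
  qed (use D(2) in \<open>simp add: divide_inverse continuous_intros\<close>)
qed

lemma moment_pos_if_ge_linear:
  fixes f :: "real \<Rightarrow> real"
  assumes "0 < L" and "continuous_on {0..L} f" and "0 < a" and "\<forall>x\<in>{0..L}. a * x \<le> f x"
  shows "0 < integral {0..L} (\<lambda>y. y * f y)"
proof (rule integral_pos_continuous[of 0 L _ L])
  show "0 \<le> y * f y" if "y \<in> {0..L}" for y
  proof -
    have "0 \<le> a * y" using assms(3) that by simp
    also have "\<dots> \<le> f y" using assms(4) that by blast
    finally show ?thesis using that by simp
  qed
  have "0 < a * L" using assms by simp
  also have "\<dots> \<le> f L" using assms by auto
  finally show "0 < L * f L" using assms by simp
  show "continuous_on {0..L} (\<lambda>y. y * f y)"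
    by (intro continuous_intros assms(2))
qed (use assms(1) in auto)

lemma ratio_sandwich_diff:
  fixes a b p p' P P' :: real
  assumes p': "a * p \<le> p'" "p' \<le> b * p" and P': "a * P \<le> P'" "P' \<le> b * P"
    and pos: "0 < a" "0 < P" "0 \<le> p"
  shows "\<bar>p' / P' - p / P\<bar> \<le> (b - a) / a * (p / P)"
proof -
  define r where "r = P' / P"
  have r: "a \<le> r" "r \<le> b" "P' = r * P"
    using P' pos by (auto simp: r_def field_simps)
  have "a * p \<le> r * p" "r * p \<le> b * p"
    using r pos by (auto intro: mult_right_mono)
  then have num: "\<bar>p' - r * p\<bar> \<le> (b - a) * p"
    using p' by (simp add: abs_le_iff algebra_simps)
  have "0 < r" using r pos by linarith
  then have "\<bar>p' / P' - p / P\<bar> = \<bar>p' - r * p\<bar> / (r * P)"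
    using pos r(3) by (simp add: field_simps abs_divide)
  also have "\<dots> \<le> (b - a) * p / (r * P)"
    using num \<open>0 < r\<close> pos by (intro divide_right_mono) auto
  also have "\<dots> \<le> (b - a) * p / (a * P)"
    using r pos by (intro divide_left_mono mult_right_mono mult_nonneg_nonneg mult_pos_pos) auto
  also have "\<dots> = (b - a) / a * (p / P)"
    by simp
  finally show ?thesis .
qed

lemma has_real_derivative_radial:
  fixes G g :: "real \<Rightarrow> real"
  assumes "\<forall>x. G x = g \<bar>x\<bar>" and "(g has_real_derivative g') (at r)" and "0 < r"
  shows "(G has_real_derivative g') (at r)"
proof (rule has_field_derivative_transform_within_open[OF assms(2), of "{0<..}"])
  show "\<And>y. y \<in> {0<..} \<Longrightarrow> g y = G y"
    using assms(1) by simp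
qed (use assms(3) in auto)

section \<open>The kernel \<open>G(x - y) - G(x + y)\<close>\<close>

locale radial_kernel =
  fixes G G' G'' :: "real \<Rightarrow> real"
  assumes even: "\<And>x. G (- x) = G x"
    and G_deriv: "\<And>x. (G has_real_derivative G' x) (at x)"
    and G'_deriv: "\<And>x. (G' has_real_derivative G'' x) (at x)"
    and continuous_G'': "continuous_on UNIV G''"
    and G''_zero_neg: "G'' 0 < 0"
    and G'_neg: "\<And>x. 0 < x \<Longrightarrow> G' x < 0"
begin

definition kernel :: "real \<Rightarrow> real \<Rightarrow> real" where
  "kernel x y = G (x - y) - G (x + y)"

lemma continuous_G: "continuous_on A G"
  using G_deriv by (meson DERIV_isCont continuous_at_imp_continuous_on)

lemma continuous_G': "continuous_on A G'"
  using G'_deriv by (meson DERIV_isCont continuous_at_imp_continuous_on)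

lemma G'_odd: "G' (- x) = - G' x"
proof -
  have "((\<lambda>x. G (- x)) has_real_derivative G' (- x) * (- 1)) (at x)"
    by (rule DERIV_chain2[OF G_deriv]) (auto intro!: derivative_eq_intros)
  then have "(G has_real_derivative - G' (- x)) (at x)"
    using even by simp
  then show ?thesis
    using DERIV_unique[OF G_deriv] by simp
qed

lemma G'_nonneg: "x \<le> 0 \<Longrightarrow> 0 \<le> G' x"
  using G'_neg[of "- x"] G'_odd[of x] G'_odd[of 0] by (cases "x = 0") auto

lemma G_strict_antimono: "0 \<le> a \<Longrightarrow> a < b \<Longrightarrow> G b < G a"
  by (rule DERIV_neg_imp_decreasing_open[OF _ _ continuous_G]) (use G_deriv G'_neg in force)+

lemma G_abs: "G \<bar>x\<bar> = G x"
  using even[of x] by (cases "0 \<le> x") auto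

lemma kernel_commute: "kernel x y = kernel y x"
  unfolding kernel_def using even[of "x - y"] by (simp add: add.commute)

lemma kernel_zero_left [simp]: "kernel 0 y = 0"
  unfolding kernel_def using even[of y] by simp

lemma kernel_zero_right [simp]: "kernel x 0 = 0"
  unfolding kernel_def by simp

lemma kernel_pos: "0 < x \<Longrightarrow> 0 < y \<Longrightarrow> 0 < kernel x y"
  using G_strict_antimono[of "\<bar>x - y\<bar>" "x + y"] G_abs[of "x - y"] unfolding kernel_def by auto

lemma kernel_nonneg: "0 \<le> x \<Longrightarrow> 0 \<le> y \<Longrightarrow> 0 \<le> kernel x y"
  using kernel_pos[of x y] by (cases "x = 0"; cases "y = 0") auto

lemma continuous_on_kernel: "continuous_on A (\<lambda>(x, y). kernel x y)"
  unfolding kernel_def split_beta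
  by (intro continuous_intros continuous_on_compose2[OF continuous_G]) auto

lemma continuous_on_kernel_right: "continuous_on A (kernel x)"
  unfolding kernel_def by (intro continuous_intros continuous_on_compose2[OF continuous_G]) auto

lemma kernel_deriv_left: "((\<lambda>x. kernel x y) has_real_derivative G' (x - y) - G' (x + y)) (at x)"
  unfolding kernel_def by (rule derivative_eq_intros DERIV_chain2[OF G_deriv] | simp)+

lemma kernel_ge_if_deriv_ge:
  assumes "0 \<le> x" and "\<And>t. 0 \<le> t \<Longrightarrow> t \<le> x \<Longrightarrow> c \<le> G' (t - y) - G' (t + y)"
  shows "c * x \<le> kernel x y"
  using DERIV_lower_bound_diff[of 0 x "\<lambda>x. kernel x y", OF _ kernel_deriv_left] assms
  by (simp add: mult.commute)

lemma kernel_le_if_deriv_le: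
  assumes "0 \<le> x" and "\<And>t. 0 \<le> t \<Longrightarrow> t \<le> x \<Longrightarrow> G' (t - y) - G' (t + y) \<le> c"
  shows "kernel x y \<le> c * x"
  using DERIV_upper_bound_diff[of 0 x "\<lambda>x. kernel x y", OF _ kernel_deriv_left] assms
  by (simp add: mult.commute)

lemma kernel_upper_bound:
  "\<exists>M>0. \<forall>x\<in>{0..L}. \<forall>y\<in>{0..L}. kernel x y \<le> M * x * y"
proof -
  have "bounded (G'' ` {-2 * \<bar>L\<bar>..2 * \<bar>L\<bar>})"
    by (intro compact_imp_bounded compact_continuous_image continuous_on_subset[OF continuous_G'']) auto
  then obtain B where B: "B > 0" "\<And>s. \<bar>s\<bar> \<le> 2 * \<bar>L\<bar> \<Longrightarrow> \<bar>G'' s\<bar> \<le> B"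
    unfolding bounded_pos by force
  have "kernel x y \<le> 2 * B * x * y" if "x \<in> {0..L}" "y \<in> {0..L}" for x y
  proof -
    have deriv_le: "G' (t - y) - G' (t + y) \<le> 2 * B * y" if "0 \<le> t" "t \<le> x" for t
    proof -
      have "(t + y - (t - y)) * - B \<le> G' (t + y) - G' (t - y)"
      proof (rule DERIV_lower_bound_diff[OF _ G'_deriv])
        fix s assume "t - y \<le> s" "s \<le> t + y"
        then have "\<bar>s\<bar> \<le> 2 * \<bar>L\<bar>"
          using \<open>x \<in> {0..L}\<close> \<open>y \<in> {0..L}\<close> that by auto
        then show "- B \<le> G'' s"
          using B(2)[of s] by linarith
      qed (use \<open>y \<in> {0..L}\<close> in auto)
      then show ?thesis by (simp add: algebra_simps)
    qed
    have "kernel x y \<le> 2 * B * y * x"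
      using kernel_le_if_deriv_le[of x y "2 * B * y"] deriv_le \<open>x \<in> {0..L}\<close> by simp
    then show ?thesis by (simp add: mult_ac)
  qed
  moreover have "2 * B > 0" using B(1) by simp
  ultimately show ?thesis by blast
qed

lemma kernel_lower_bound:
  assumes L: "0 < L"
  shows "\<exists>m>0. \<forall>x\<in>{0..L}. \<forall>y\<in>{0..L}. m * x * y \<le> kernel x y"
proof -
  define c0 where "c0 = - G'' 0 / 2"
  have c0: "0 < c0" using G''_zero_neg by (simp add: c0_def)
  have "\<forall>e>0. \<exists>d>0. \<forall>s. dist s 0 < d \<longrightarrow> dist (G'' s) (G'' 0) < e"
    using continuous_G'' unfolding continuous_on_iff by blast
  then obtain d where d: "0 < d" "\<And>s. dist s 0 < d \<Longrightarrow> dist (G'' s) (G'' 0) < c0"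
    using c0 by blast
  define \<delta> where "\<delta> = min (d / 3) L"
  have \<delta>: "0 < \<delta>" "\<delta> \<le> L" using d L by (auto simp: \<delta>_def)
  have G''_le: "G'' s \<le> - c0" if "\<bar>s\<bar> \<le> 2 * \<delta>" for s
  proof -
    have "\<bar>s\<bar> < d" using that d(1) by (simp add: \<delta>_def)
    then have "\<bar>G'' s - G'' 0\<bar> < c0" using d(2)[of s] by (simp add: dist_real_def)
    then show ?thesis by (simp add: c0_def)
  qed
  obtain z where z: "z \<in> {\<delta>..2 * L}" "\<And>s. s \<in> {\<delta>..2 * L} \<Longrightarrow> G' s \<le> G' z"
    using continuous_attains_sup[of "{\<delta>..2 * L}" G'] continuous_G' \<delta> by auto
  define c1 where "c1 = - G' z"
  have c1: "0 < c1" using G'_neg[of z] z(1) \<delta> by (simp add: c1_def)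
  define m where "m = min (2 * c0) (c1 / L)"
  have m: "0 < m" using c0 c1 L by (simp add: m_def)
  \<comment> \<open>For \<open>y \<le> \<delta>\<close> the concavity of \<open>G\<close> near 0 gives \<open>K(x,y) \<ge> 2 c\<^sub>0 x y\<close>; for \<open>y \<ge> \<delta>\<close>,
    \<open>G'(t - y) \<ge> 0\<close> and \<open>G'(t + y) \<le> -c\<^sub>1\<close> give \<open>K(x,y) \<ge> c\<^sub>1 x\<close>.\<close>
  have ordered: "m * x * y \<le> kernel x y" if xy: "0 \<le> x" "x \<le> y" "y \<le> L" for x y
  proof (cases "y \<le> \<delta>")
    case True
    have "2 * c0 * y \<le> G' (t - y) - G' (t + y)" if "0 \<le> t" "t \<le> x" for t
    proof -
      have "G' (t + y) - G' (t - y) \<le> (t + y - (t - y)) * - c0"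
        by (rule DERIV_upper_bound_diff[OF _ G'_deriv]) (use xy that True in \<open>auto intro!: G''_le\<close>)
      then show ?thesis by (simp add: algebra_simps)
    qed
    then have "2 * c0 * y * x \<le> kernel x y"
      by (rule kernel_ge_if_deriv_ge[OF xy(1)])
    moreover have "m * x * y \<le> 2 * c0 * y * x"
      using mult_right_mono[of m "2 * c0" "x * y"] xy by (simp add: m_def mult_ac)
    ultimately show ?thesis by linarith
  next
    case False
    have "c1 \<le> G' (t - y) - G' (t + y)" if "0 \<le> t" "t \<le> x" for t
      using G'_nonneg[of "t - y"] z(2)[of "t + y"] xy that False by (auto simp: c1_def)
    then have "c1 * x \<le> kernel x y"
      by (rule kernel_ge_if_deriv_ge[OF xy(1)])
    moreover have "m * x * y \<le> c1 * x"
    proof -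
      have "m * y \<le> c1 / L * L"
        using xy L c1 by (intro mult_mono) (auto simp: m_def)
      then show ?thesis
        using mult_left_mono[of "m * y" c1 x] xy L by (simp add: mult_ac)
    qed
    ultimately show ?thesis by linarith
  qed
  have "m * x * y \<le> kernel x y" if "x \<in> {0..L}" "y \<in> {0..L}" for x y
    using ordered[of x y] ordered[of y x] kernel_commute[of x y] that
    by (cases "x \<le> y") (auto simp: mult_ac)
  then show ?thesis using m by blast
qed

section \<open>The operator \<open>\<H>\<^sub>L\<close>\<close>

abbreviation H :: "real \<Rightarrow> (real \<Rightarrow> real) \<Rightarrow> real \<Rightarrow> real" where
  "H \<equiv> H_op G"

lemma H_kernel: "H L f x = integral {0..L} (\<lambda>y. kernel x y * f y)"
  unfolding H_op_def kernel_def ..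

lemma integrable_kernel_times:
  "continuous_on {0..L} f \<Longrightarrow> (\<lambda>y. kernel x y * f y) integrable_on {0..L}"
  by (intro integrable_continuous_interval continuous_intros continuous_on_kernel_right)

lemma continuous_on_H: "continuous_on {0..L} f \<Longrightarrow> continuous_on A (H L f)"
  unfolding H_op_def
  using integral_continuous_on_param[of UNIV 0 L "\<lambda>x y. (G (x - y) - G (x + y)) * f y"]
    continuous_on_reflected_difference_times[OF continuous_G, of L f UNIV]
  by (auto intro: continuous_on_subset)

lemma H_has_derivative:
  assumes f: "continuous_on {0..L} f" and x: "x \<in> {0..L}"
  shows "(H L f has_real_derivative integral {0..L} (\<lambda>y. (G' (x - y) - G' (x + y)) * f y))
    (at x within {0..L})"
  unfolding H_op_def
proof (rule leibniz_rule_field_derivative[where ?fx = "\<lambda>x y. (G' (x - y) - G' (x + y)) * f y",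
      unfolded cbox_interval])
  fix x t :: real
  show "((\<lambda>x. (G (x - t) - G (x + t)) * f t) has_real_derivative (G' (x - t) - G' (x + t)) * f t)
      (at x within {0..L})"
    using kernel_deriv_left[of t x] unfolding kernel_def
    by (auto intro: DERIV_subset DERIV_cmult_right)
next
  show "continuous_on ({0..L} \<times> {0..L}) (\<lambda>(x, t). (G' (x - t) - G' (x + t)) * f t)"
    by (rule continuous_on_reflected_difference_times[OF continuous_G' f])
qed (use x integrable_kernel_times[OF f] in \<open>auto simp: kernel_def\<close>)

lemma H_C1:
  assumes f: "continuous_on {0..L} f"
  shows "C1_on_interval L (H L f)"
  unfolding C1_on_interval_def
proof (intro exI[of _ "\<lambda>x. integral {0..L} (\<lambda>y. (G' (x - y) - G' (x + y)) * f y)"] conjI ballI)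
  show "continuous_on {0..L} (\<lambda>x. integral {0..L} (\<lambda>y. (G' (x - y) - G' (x + y)) * f y))"
    using integral_continuous_on_param[of "{0..L}" 0 L "\<lambda>x y. (G' (x - y) - G' (x + y)) * f y"]
      continuous_on_reflected_difference_times[OF continuous_G' f, of "{0..L}"] by simp
qed (rule H_has_derivative[OF f])

lemma H_zero [simp]: "H L f 0 = 0"
  unfolding H_kernel by simp

lemma H_cmult: "H L (\<lambda>y. c * f y) x = c * H L f x"
  unfolding H_kernel by (simp add: mult.left_commute)

lemma H_diff:
  assumes "continuous_on {0..L} f" "continuous_on {0..L} g"
  shows "H L (\<lambda>y. f y - g y) x = H L f x - H L g x"
  unfolding H_kernel right_diff_distrib
  by (rule integral_diff) (intro integrable_kernel_times assms)+

lemma H_mono: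
  assumes "continuous_on {0..L} f" "continuous_on {0..L} g"
    and "\<And>y. y \<in> {0..L} \<Longrightarrow> f y \<le> g y" and "0 \<le> x"
  shows "H L f x \<le> H L g x"
  unfolding H_kernel
  by (rule integral_le[OF integrable_kernel_times[OF assms(1)] integrable_kernel_times[OF assms(2)]])
     (use assms kernel_nonneg in \<open>auto intro: mult_left_mono\<close>)

lemma H_nonneg:
  assumes "continuous_on {0..L} f" "\<And>y. y \<in> {0..L} \<Longrightarrow> 0 \<le> f y" and "0 \<le> x"
  shows "0 \<le> H L f x"
  using H_mono[of L "\<lambda>_. 0" f x] assms by (simp add: H_kernel)

lemma H_ge_moment:
  assumes m: "\<forall>x\<in>{0..L}. \<forall>y\<in>{0..L}. m * x * y \<le> kernel x y"
    and f: "continuous_on {0..L} f" "\<And>y. y \<in> {0..L} \<Longrightarrow> 0 \<le> f y" and x: "x \<in> {0..L}"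
  shows "m * x * integral {0..L} (\<lambda>y. y * f y) \<le> H L f x"
proof -
  have "integral {0..L} (\<lambda>y. (m * x) * (y * f y)) \<le> H L f x"
    unfolding H_kernel
    by (rule integral_le) (use m f x in \<open>auto intro!: integrable_continuous_interval continuous_intros
        continuous_on_kernel_right mult_right_mono simp: mult.assoc[symmetric]\<close>)
  then show ?thesis by simp
qed

lemma H_le_moment:
  assumes M: "\<forall>x\<in>{0..L}. \<forall>y\<in>{0..L}. kernel x y \<le> M * x * y"
    and f: "continuous_on {0..L} f" "\<And>y. y \<in> {0..L} \<Longrightarrow> 0 \<le> f y" and x: "x \<in> {0..L}"
  shows "H L f x \<le> M * x * integral {0..L} (\<lambda>y. y * f y)"
proof -
  have "H L f x \<le> integral {0..L} (\<lambda>y. (M * x) * (y * f y))"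
    unfolding H_kernel
    by (rule integral_le) (use M f x in \<open>auto intro!: integrable_continuous_interval continuous_intros
        continuous_on_kernel_right mult_right_mono simp: mult.assoc[symmetric]\<close>)
  then show ?thesis by simp
qed

lemma H_symmetric:
  assumes f: "continuous_on {0..L} f" and g: "continuous_on {0..L} g"
  shows "integral {0..L} (\<lambda>x. H L f x * g x) = integral {0..L} (\<lambda>x. f x * H L g x)"
proof -
  have "continuous_on (cbox (0, 0) (L, L)) (\<lambda>(x, y). kernel x y * f y * g x)"
    unfolding split_beta using continuous_on_kernel[unfolded split_beta]
    by (intro continuous_intros continuous_on_compose2[OF f] continuous_on_compose2[OF g])
       (auto simp: cbox_Pair_eq)
  then have "integral (cbox 0 L) (\<lambda>x. integral (cbox 0 L) (\<lambda>y. kernel x y * f y * g x))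
      = integral (cbox 0 L) (\<lambda>y. integral (cbox 0 L) (\<lambda>x. kernel x y * f y * g x))"
    by (rule integral_swap_continuous)
  moreover have "integral {0..L} (\<lambda>x. kernel x y * f y * g x) = f y * H L g y" for y
    unfolding H_kernel integral_mult_right[symmetric]
    by (rule integral_cong) (simp add: kernel_commute[of _ y] mult_ac)
  ultimately show ?thesis
    by (simp add: H_kernel mult.commute)
qed

lemma tendsto_H_uniform_limit:
  assumes lim: "uniform_limit {0..L} f g sequentially" and f: "\<And>n. continuous_on {0..L} (f n)"
  shows "(\<lambda>n. H L (f n) x) \<longlonglongrightarrow> H L g x"
proof -
  have g: "continuous_on {0..L} g"
    by (rule uniform_limit_theorem[OF _ lim]) (use f in auto)
  have "uniform_limit {0..L} (\<lambda>n y. kernel x y * f n y) (\<lambda>y. kernel x y * g y) sequentially"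
    by (rule uniform_lim_mult[OF uniform_limit_const lim])
       (intro compact_imp_bounded compact_continuous_image continuous_on_kernel_right g compact_Icc)+
  then obtain I J where I: "\<And>n. ((\<lambda>y. kernel x y * f n y) has_integral I n) {0..L}"
    and J: "((\<lambda>y. kernel x y * g y) has_integral J) {0..L}" and "I \<longlonglongrightarrow> J"
    by (rule uniform_limit_integral) (auto intro!: continuous_intros continuous_on_kernel_right f)
  moreover have "I = (\<lambda>n. H L (f n) x)" "J = H L g x"
    using integral_unique[OF I] integral_unique[OF J] by (auto simp: H_kernel)
  ultimately show ?thesis by simp
qed

section \<open>Positive eigenpairs\<close>

text \<open>
  Only continuity is required of the eigenfunction: \<open>C\<^sup>1\<close> regularity follows from the
  equation, see \<open>eigenpair_imp_pos_eigenvalue\<close>.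
\<close>

definition eigenpair :: "real \<Rightarrow> real \<Rightarrow> (real \<Rightarrow> real) \<Rightarrow> bool" where
  "eigenpair L e u \<longleftrightarrow> continuous_on {0..L} u \<and> u 0 = 0 \<and> (\<forall>x\<in>{0..L}. 0 \<le> u x)
     \<and> (\<exists>x\<in>{0..L}. u x \<noteq> 0) \<and> (\<forall>x\<in>{0..L}. e * u x = H L u x)"

lemma pos_eigenvalue_imp_eigenpair: "pos_eigenvalue G L e \<Longrightarrow> \<exists>u. eigenpair L e u"
  unfolding pos_eigenvalue_def eigenpair_def X_space_def
  using C1_on_interval_imp_continuous_on by blast

lemma eigenfunction_pos_point:
  assumes "eigenpair L e u"
  obtains x0 where "x0 \<in> {0..L}" "0 < x0" "0 < u x0"
proof -
  obtain x0 where x0: "x0 \<in> {0..L}" "u x0 \<noteq> 0"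
    using assms unfolding eigenpair_def by blast
  moreover have "0 \<le> u x0" "x0 \<noteq> 0"
    using assms x0 unfolding eigenpair_def by auto
  ultimately show thesis
    by (intro that[of x0]) auto
qed

lemma eigenpair_integral_pos:
  assumes L: "0 < L" and u: "eigenpair L e u" and v: "continuous_on {0..L} v"
    and c: "0 < c" "\<forall>x\<in>{0..L}. c * x \<le> v x"
  shows "0 < integral {0..L} (\<lambda>x. u x * v x)"
proof -
  obtain x0 where x0: "x0 \<in> {0..L}" "0 < x0" "0 < u x0"
    using eigenfunction_pos_point[OF u] .
  have v_nonneg: "0 \<le> v x" if "x \<in> {0..L}" for x
  proof -
    have "0 \<le> c * x" using c(1) that by simp
    also have "\<dots> \<le> v x" using c(2) that by blast
    finally show ?thesis .
  qed
  have "0 < c * x0" using c(1) x0(2) by simp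
  also have "\<dots> \<le> v x0" using c(2) x0(1) by blast
  finally have "0 < v x0" .
  show ?thesis
  proof (rule integral_pos_continuous[of 0 L _ x0])
    show "continuous_on {0..L} (\<lambda>x. u x * v x)"
      using u v unfolding eigenpair_def by (intro continuous_intros) auto
    show "0 \<le> u x * v x" if "x \<in> {0..L}" for x
      using u v_nonneg[OF that] that unfolding eigenpair_def by simp
  qed (use x0 \<open>0 < v x0\<close> L in auto)
qed

lemma eigenpair_lower_bound:
  assumes L: "0 < L" and u: "eigenpair L e u"
  shows "\<exists>c>0. \<forall>x\<in>{0..L}. c * x \<le> e * u x"
proof -
  obtain m where m: "0 < m" "\<forall>x\<in>{0..L}. \<forall>y\<in>{0..L}. m * x * y \<le> kernel x y"
    using kernel_lower_bound[OF L] by blast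
  define I where "I = integral {0..L} (\<lambda>y. u y * y)"
  have I: "0 < I"
    unfolding I_def by (rule eigenpair_integral_pos[OF L u _ zero_less_one]) (auto intro: continuous_intros)
  have "m * I * x \<le> e * u x" if "x \<in> {0..L}" for x
    using H_ge_moment[OF m(2), of u x] u that unfolding eigenpair_def I_def by (simp add: mult_ac)
  then show ?thesis
    using m I by (intro exI[of _ "m * I"]) auto
qed

lemma eigenvalue_pos:
  assumes L: "0 < L" and u: "eigenpair L e u"
  shows "0 < e"
proof -
  obtain c where c: "0 < c" "\<forall>x\<in>{0..L}. c * x \<le> e * u x"
    using eigenpair_lower_bound[OF assms] by blast
  obtain x0 where x0: "x0 \<in> {0..L}" "0 < x0" "0 < u x0"
    using eigenfunction_pos_point[OF u] .
  have "0 < c * x0" using c(1) x0(2) by simp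
  also have "\<dots> \<le> e * u x0" using c(2) x0(1) by blast
  finally have "0 < e * u x0" .
  with x0(3) show ?thesis
    by (simp add: zero_less_mult_iff)
qed

lemma eigenpair_imp_pos_eigenvalue:
  assumes L: "0 < L" and u: "eigenpair L e u"
  shows "pos_eigenvalue G L e"
proof -
  have "C1_on_interval L (\<lambda>x. H L u x / e)"
    using u unfolding eigenpair_def by (blast intro: C1_on_interval_cdivide H_C1)
  moreover have "\<forall>x\<in>{0..L}. H L u x / e = u x"
    using u eigenvalue_pos[OF assms] unfolding eigenpair_def by (auto simp: field_simps)
  ultimately have "C1_on_interval L u"
    by (auto intro: C1_on_interval_cong)
  with u show ?thesis
    unfolding pos_eigenvalue_def eigenpair_def X_space_def by blast
qed

lemma eigenfunction_ge_linear:
  assumes L: "0 < L" and u: "eigenpair L e u"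
  shows "\<exists>c>0. \<forall>x\<in>{0..L}. c * x \<le> u x"
proof -
  obtain c where c: "0 < c" "\<forall>x\<in>{0..L}. c * x \<le> e * u x"
    using eigenpair_lower_bound[OF assms] by blast
  have e: "0 < e" by (rule eigenvalue_pos[OF assms])
  show ?thesis
    using c e by (intro exI[of _ "c / e"]) (auto simp: field_simps)
qed

lemma eigenvalue_unique:
  assumes L: "0 < L" and u: "eigenpair L e1 u" and v: "eigenpair L e2 v"
  shows "e1 = e2"
proof -
  have uc: "continuous_on {0..L} u" and vc: "continuous_on {0..L} v"
    using u v unfolding eigenpair_def by auto
  obtain c where "0 < c" "\<forall>x\<in>{0..L}. c * x \<le> v x"
    using eigenfunction_ge_linear[OF L v] by blast
  then have pos: "0 < integral {0..L} (\<lambda>x. u x * v x)"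
    by (rule eigenpair_integral_pos[OF L u vc])
  have "e1 * integral {0..L} (\<lambda>x. u x * v x) = integral {0..L} (\<lambda>x. H L u x * v x)"
    using u unfolding eigenpair_def integral_mult_right[symmetric]
    by (intro integral_cong) (simp add: mult.assoc)
  also have "\<dots> = integral {0..L} (\<lambda>x. u x * H L v x)"
    by (rule H_symmetric[OF uc vc])
  also have "\<dots> = e2 * integral {0..L} (\<lambda>x. u x * v x)"
    using v unfolding eigenpair_def integral_mult_right[symmetric]
    by (intro integral_cong) (simp add: mult_ac)
  finally show ?thesis using pos by simp
qed

lemma H_enlarge_interval:
  assumes L: "0 < L1" "L1 < L2" and v: "continuous_on {0..L2} v"
    and c: "0 < c" "\<forall>x\<in>{0..L2}. c * x \<le> v x"
  shows "\<exists>a>0. \<forall>x\<in>{0..L1}. H L1 v x + a * x \<le> H L2 v x"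
proof -
  obtain m where m: "0 < m" "\<forall>x\<in>{0..L2}. \<forall>y\<in>{0..L2}. m * x * y \<le> kernel x y"
    using kernel_lower_bound[of L2] L by auto
  have v': "continuous_on {L1..L2} v"
    using v by (rule continuous_on_subset) (use L in auto)
  have v_nonneg: "0 \<le> v y" if "y \<in> {L1..L2}" for y
  proof -
    have "0 \<le> c * y" using c(1) that L by simp
    also have "\<dots> \<le> v y" using c(2) that L by simp
    finally show ?thesis .
  qed
  define J where "J = integral {L1..L2} (\<lambda>y. y * v y)"
  have J: "0 < J"
    unfolding J_def
  proof (rule integral_pos_continuous[of L1 L2 _ L2])
    have "0 < c * L2" using c L by simp
    also have "\<dots> \<le> v L2" using c L by auto
    finally show "0 < L2 * v L2" using L by simp
    show "continuous_on {L1..L2} (\<lambda>y. y * v y)"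
      by (intro continuous_intros v')
    show "0 \<le> y * v y" if "y \<in> {L1..L2}" for y
      using v_nonneg[OF that] that L by simp
  qed (use L in auto)
  have "H L1 v x + m * J * x \<le> H L2 v x" if x: "x \<in> {0..L1}" for x
  proof -
    have "H L2 v x = H L1 v x + integral {L1..L2} (\<lambda>y. kernel x y * v y)"
      unfolding H_kernel
      by (rule Henstock_Kurzweil_Integration.integral_combine[symmetric]) (use L in \<open>auto intro: integrable_kernel_times[OF v]\<close>)
    moreover have "integral {L1..L2} (\<lambda>y. (m * x) * (y * v y)) \<le> integral {L1..L2} (\<lambda>y. kernel x y * v y)"
    proof (rule integral_le)
      fix y assume y: "y \<in> {L1..L2}"
      then have "m * x * y \<le> kernel x y" using m(2) x L by auto
      then show "m * x * (y * v y) \<le> kernel x y * v y"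
        using mult_right_mono[OF _ v_nonneg[OF y]] by (metis mult.assoc)
    qed (intro integrable_continuous_interval continuous_intros continuous_on_kernel_right v')+
    moreover have "integral {L1..L2} (\<lambda>y. (m * x) * (y * v y)) = m * x * J"
      unfolding J_def by simp
    ultimately show ?thesis
      by (simp add: mult_ac)
  qed
  then show ?thesis
    using m(1) J by (intro exI[of _ "m * J"]) auto
qed

lemma eigenvalue_strict_mono:
  assumes L: "0 < L1" "L1 < L2" and u: "eigenpair L1 e1 u" and v: "eigenpair L2 e2 v"
  shows "e1 < e2"
proof -
  have uc: "continuous_on {0..L1} u" and vc2: "continuous_on {0..L2} v"
    using u v unfolding eigenpair_def by auto
  have vc: "continuous_on {0..L1} v"
    using vc2 by (rule continuous_on_subset) (use L in auto)
  obtain c where c: "0 < c" "\<forall>x\<in>{0..L2}. c * x \<le> v x"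
    using eigenfunction_ge_linear[OF _ v] L by force
  obtain a where a: "0 < a" "\<forall>x\<in>{0..L1}. H L1 v x + a * x \<le> H L2 v x"
    using H_enlarge_interval[OF L vc2 c] by blast
  have uv: "0 < integral {0..L1} (\<lambda>x. u x * v x)"
    by (rule eigenpair_integral_pos[OF L(1) u vc c(1)]) (use c L in auto)
  have ux: "0 < integral {0..L1} (\<lambda>x. u x * x)"
    by (rule eigenpair_integral_pos[OF L(1) u _ zero_less_one]) (auto intro: continuous_intros)
  have "e1 * integral {0..L1} (\<lambda>x. u x * v x) + a * integral {0..L1} (\<lambda>x. u x * x)
      = integral {0..L1} (\<lambda>x. u x * (H L1 v x + a * x))"
  proof -
    have "e1 * integral {0..L1} (\<lambda>x. u x * v x) = integral {0..L1} (\<lambda>x. H L1 u x * v x)"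
      using u unfolding eigenpair_def integral_mult_right[symmetric]
      by (intro integral_cong) (simp add: mult.assoc)
    also have "\<dots> = integral {0..L1} (\<lambda>x. u x * H L1 v x)"
      by (rule H_symmetric[OF uc vc])
    moreover have "a * integral {0..L1} (\<lambda>x. u x * x) = integral {0..L1} (\<lambda>x. u x * (a * x))"
      by (simp add: mult.left_commute)
    moreover have "integral {0..L1} (\<lambda>x. u x * (H L1 v x + a * x))
        = integral {0..L1} (\<lambda>x. u x * H L1 v x) + integral {0..L1} (\<lambda>x. u x * (a * x))"
      unfolding distrib_left
      by (intro integral_add integrable_continuous_interval continuous_intros continuous_on_H uc vc)
    ultimately show ?thesis by simp
  qed
  also have "\<dots> \<le> integral {0..L1} (\<lambda>x. u x * H L2 v x)"
    using u a(2) unfolding eigenpair_def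
    by (intro integral_le mult_left_mono)
       (auto intro!: integrable_continuous_interval continuous_intros continuous_on_H uc vc vc2)
  also have "\<dots> = e2 * integral {0..L1} (\<lambda>x. u x * v x)"
    using v L unfolding eigenpair_def integral_mult_right[symmetric]
    by (intro integral_cong) (simp add: mult_ac)
  finally have "e1 * integral {0..L1} (\<lambda>x. u x * v x) < e2 * integral {0..L1} (\<lambda>x. u x * v x)"
    using mult_pos_pos[OF a(1) ux] by linarith
  then show ?thesis
    using uv by simp
qed

section \<open>Existence by power iteration\<close>

lemma H_ratio_lower_gain:
  assumes m: "\<forall>x\<in>{0..L}. \<forall>y\<in>{0..L}. m * x * y \<le> kernel x y" "0 \<le> m"
    and M: "\<forall>x\<in>{0..L}. \<forall>y\<in>{0..L}. kernel x y \<le> M * x * y" "0 < M"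
    and f: "continuous_on {0..L} f" and g: "continuous_on {0..L} g" "\<And>y. y \<in> {0..L} \<Longrightarrow> 0 \<le> g y"
    and \<Gamma>: "0 < integral {0..L} (\<lambda>y. y * g y)"
    and \<alpha>: "\<And>y. y \<in> {0..L} \<Longrightarrow> \<alpha> * g y \<le> f y"
    and x: "x \<in> {0..L}"
  shows "(\<alpha> + m * integral {0..L} (\<lambda>y. y * (f y - \<alpha> * g y)) / (M * integral {0..L} (\<lambda>y. y * g y)))
      * H L g x \<le> H L f x"
proof -
  define \<Gamma> where "\<Gamma> = integral {0..L} (\<lambda>y. y * g y)"
  define A where "A = integral {0..L} (\<lambda>y. y * (f y - \<alpha> * g y))"
  have fg: "continuous_on {0..L} (\<lambda>y. \<alpha> * g y)"
    using g by (intro continuous_intros)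
  have "0 \<le> A"
    unfolding A_def using \<alpha> x
    by (intro integral_nonneg integrable_continuous_interval continuous_intros f g) auto
  moreover have "H L g x \<le> M * x * \<Gamma>"
    unfolding \<Gamma>_def by (rule H_le_moment[OF M(1) g x])
  ultimately have "m * A / (M * \<Gamma>) * H L g x \<le> m * A / (M * \<Gamma>) * (M * x * \<Gamma>)"
    using m(2) M(2) \<Gamma> by (intro mult_left_mono) (auto simp: \<Gamma>_def)
  also have "\<dots> = m * x * A"
    using M(2) \<Gamma> by (simp add: \<Gamma>_def)
  also have "\<dots> \<le> H L (\<lambda>y. f y - \<alpha> * g y) x"
    unfolding A_def by (rule H_ge_moment[OF m(1)]) (use f g \<alpha> x in \<open>auto intro!: continuous_intros\<close>)
  also have "\<dots> = H L f x - \<alpha> * H L g x"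
    by (simp add: H_diff[OF f fg] H_cmult)
  finally show ?thesis
    by (simp add: \<Gamma>_def A_def algebra_simps)
qed

text \<open>
  Birkhoff's contraction: because \<open>m x y \<le> K(x,y) \<le> M x y\<close>, applying \<open>\<H>\<^sub>L\<close> shrinks the
  gap in any two-sided ratio bound of \<open>f\<close> against \<open>g\<close> by the factor \<open>1 - m/M\<close>.
\<close>

lemma H_ratio_contraction:
  assumes m: "\<forall>x\<in>{0..L}. \<forall>y\<in>{0..L}. m * x * y \<le> kernel x y" "0 \<le> m"
    and M: "\<forall>x\<in>{0..L}. \<forall>y\<in>{0..L}. kernel x y \<le> M * x * y" "0 < M"
    and f: "continuous_on {0..L} f" and g: "continuous_on {0..L} g" "\<And>y. y \<in> {0..L} \<Longrightarrow> 0 \<le> g y"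
    and \<Gamma>: "0 < integral {0..L} (\<lambda>y. y * g y)"
    and \<alpha>\<beta>: "\<And>y. y \<in> {0..L} \<Longrightarrow> \<alpha> * g y \<le> f y \<and> f y \<le> \<beta> * g y"
  shows "\<exists>\<alpha>' \<beta>'. \<alpha> \<le> \<alpha>' \<and> \<beta>' \<le> \<beta> \<and> \<beta>' - \<alpha>' = (\<beta> - \<alpha>) * (1 - m / M) \<and>
      (\<forall>x\<in>{0..L}. \<alpha>' * H L g x \<le> H L f x \<and> H L f x \<le> \<beta>' * H L g x)"
proof -
  define \<Gamma> where "\<Gamma> = integral {0..L} (\<lambda>y. y * g y)"
  define A where "A = integral {0..L} (\<lambda>y. y * (f y - \<alpha> * g y))"
  define B where "B = integral {0..L} (\<lambda>y. y * (- f y - (- \<beta>) * g y))"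
  have "A + B = integral {0..L} (\<lambda>y. (\<beta> - \<alpha>) * (y * g y))"
    unfolding A_def B_def
    by (subst integral_add[symmetric]) (auto intro!: integrable_continuous_interval continuous_intros
        f g integral_cong simp: algebra_simps)
  then have AB: "A + B = (\<beta> - \<alpha>) * \<Gamma>"
    by (simp add: \<Gamma>_def)
  have "0 \<le> A" "0 \<le> B"
    unfolding A_def B_def using \<alpha>\<beta>
    by (auto intro!: integral_nonneg integrable_continuous_interval continuous_intros f g)
  have neg_f: "continuous_on {0..L} (\<lambda>y. - f y)"
    using f by (intro continuous_intros)
  have bounds: "\<forall>x\<in>{0..L}. (\<alpha> + m * A / (M * \<Gamma>)) * H L g x \<le> H L f x \<and>
      H L f x \<le> (\<beta> - m * B / (M * \<Gamma>)) * H L g x"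
  proof
    fix x assume x: "x \<in> {0..L}"
    \<comment> \<open>the upper bound is the lower one for \<open>- f\<close> and \<open>- \<beta>\<close>\<close>
    have "(- \<beta> + m * B / (M * \<Gamma>)) * H L g x \<le> H L (\<lambda>y. - f y) x"
      unfolding B_def \<Gamma>_def by (rule H_ratio_lower_gain[OF m M neg_f g \<Gamma>]) (use \<alpha>\<beta> x in auto)
    moreover have "H L (\<lambda>y. - f y) x = - H L f x"
      using H_cmult[of L "- 1" f x] by simp
    ultimately show "(\<alpha> + m * A / (M * \<Gamma>)) * H L g x \<le> H L f x \<and>
        H L f x \<le> (\<beta> - m * B / (M * \<Gamma>)) * H L g x"
      using H_ratio_lower_gain[OF m M f g \<Gamma> _ x, of \<alpha>] \<alpha>\<beta>
      by (auto simp: A_def \<Gamma>_def algebra_simps)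
  qed
  have \<Gamma>_pos: "0 < \<Gamma>"
    using \<Gamma> by (simp add: \<Gamma>_def)
  have "m * A / (M * \<Gamma>) + m * B / (M * \<Gamma>) = m * (A + B) / (M * \<Gamma>)"
    by (simp add: add_divide_distrib distrib_left)
  also have "\<dots> = (\<beta> - \<alpha>) * (m / M)"
    using \<Gamma>_pos M(2) unfolding AB by simp
  finally have "(\<beta> - m * B / (M * \<Gamma>)) - (\<alpha> + m * A / (M * \<Gamma>)) = (\<beta> - \<alpha>) * (1 - m / M)"
    by (simp add: algebra_simps)
  moreover have "\<alpha> \<le> \<alpha> + m * A / (M * \<Gamma>)" "\<beta> - m * B / (M * \<Gamma>) \<le> \<beta>"
    using \<open>0 \<le> A\<close> \<open>0 \<le> B\<close> m(2) M(2) \<Gamma>_pos by simp_all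
  ultimately show ?thesis
    using bounds by blast
qed

definition iterate :: "real \<Rightarrow> (real \<Rightarrow> real) \<Rightarrow> nat \<Rightarrow> real \<Rightarrow> real" where
  "iterate L f n = (H L ^^ n) f"

lemma iterate_0 [simp]: "iterate L f 0 = f"
  by (simp add: iterate_def)

lemma iterate_Suc [simp]: "iterate L f (Suc n) = H L (iterate L f n)"
  by (simp add: iterate_def)

lemma continuous_on_iterate: "continuous_on {0..L} f \<Longrightarrow> continuous_on {0..L} (iterate L f n)"
  by (induction n) (auto intro: continuous_on_H)

lemma iterate_nonneg:
  assumes "continuous_on {0..L} f" "\<And>y. y \<in> {0..L} \<Longrightarrow> 0 \<le> f y" "x \<in> {0..L}"
  shows "0 \<le> iterate L f n x"
  using assms(3)
proof (induction n arbitrary: x)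
  case (Suc n)
  then show ?case
    using assms(1) by (auto intro!: H_nonneg continuous_on_iterate)
qed (use assms(2) in simp)

lemma continuous_on_iterate_id: "continuous_on {0..L} (iterate L (\<lambda>x. x) n)"
  by (rule continuous_on_iterate[OF continuous_on_id])

lemma iterate_id_nonneg: "x \<in> {0..L} \<Longrightarrow> 0 \<le> iterate L (\<lambda>x. x) n x"
  by (rule iterate_nonneg[OF continuous_on_id]) auto

lemma iterate_id_zero [simp]: "iterate L (\<lambda>x. x) n 0 = 0"
  by (cases n) auto

lemma iterate_id_ge_linear:
  assumes L: "0 < L"
  shows "\<exists>a>0. \<forall>x\<in>{0..L}. a * x \<le> iterate L (\<lambda>x. x) n x"
proof (induction n)
  case 0
  show ?case by (intro exI[of _ 1]) simp
next
  case (Suc n)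
  then obtain a where a: "0 < a" "\<forall>x\<in>{0..L}. a * x \<le> iterate L (\<lambda>x. x) n x" by blast
  obtain m where m: "0 < m" "\<forall>x\<in>{0..L}. \<forall>y\<in>{0..L}. m * x * y \<le> kernel x y"
    using kernel_lower_bound[OF L] by blast
  define I where "I = integral {0..L} (\<lambda>y. y * iterate L (\<lambda>x. x) n y)"
  have I: "0 < I"
    unfolding I_def by (rule moment_pos_if_ge_linear[OF L continuous_on_iterate_id a])
  have "m * I * x \<le> iterate L (\<lambda>x. x) (Suc n) x" if x: "x \<in> {0..L}" for x
    using H_ge_moment[OF m(2) continuous_on_iterate_id iterate_id_nonneg x] by (simp add: I_def mult_ac)
  then show ?case
    using m I by (intro exI[of _ "m * I"]) auto
qed

lemma iterate_id_moment_pos: "0 < L \<Longrightarrow> 0 < integral {0..L} (\<lambda>y. y * iterate L (\<lambda>x. x) n y)"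
  using iterate_id_ge_linear moment_pos_if_ge_linear[OF _ continuous_on_iterate_id] by blast

lemma iterate_id_pos:
  assumes "0 < L" "x \<in> {0<..L}"
  shows "0 < iterate L (\<lambda>x. x) n x"
proof -
  obtain a where "0 < a" "\<forall>x\<in>{0..L}. a * x \<le> iterate L (\<lambda>x. x) n x"
    using iterate_id_ge_linear[OF assms(1)] by blast
  then have "a * x \<le> iterate L (\<lambda>x. x) n x" using assms(2) by auto
  moreover have "0 < a * x" using \<open>0 < a\<close> assms(2) by simp
  ultimately show ?thesis by linarith
qed

lemma iterate_ratio_bounds:
  assumes L: "0 < L"
  obtains \<alpha> \<beta> :: "nat \<Rightarrow> real" and D q where "0 \<le> q" "q < 1" "0 < \<alpha> 0" "incseq \<alpha>" "decseq \<beta>"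
    "\<And>n. \<beta> n - \<alpha> n = D * q ^ n"
    "\<And>n x. x \<in> {0..L} \<Longrightarrow> \<alpha> n * iterate L (\<lambda>x. x) n x \<le> iterate L (\<lambda>x. x) (Suc n) x
      \<and> iterate L (\<lambda>x. x) (Suc n) x \<le> \<beta> n * iterate L (\<lambda>x. x) n x"
proof -
  obtain m where m: "0 < m" "\<forall>x\<in>{0..L}. \<forall>y\<in>{0..L}. m * x * y \<le> kernel x y"
    using kernel_lower_bound[OF L] by blast
  obtain M where M: "0 < M" "\<forall>x\<in>{0..L}. \<forall>y\<in>{0..L}. kernel x y \<le> M * x * y"
    using kernel_upper_bound by blast
  have "m * L * L \<le> kernel L L" "kernel L L \<le> M * L * L"
    using m(2) M(2) L by auto
  then have "m * L * L \<le> M * L * L"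
    by linarith
  then have "m \<le> M"
    using L by (simp add: mult.assoc)
  define q where "q = 1 - m / M"
  have q: "0 \<le> q" "q < 1"
    using m M \<open>m \<le> M\<close> by (auto simp: q_def field_simps)
  define I0 where "I0 = integral {0..L} (\<lambda>y. y * y)"
  have I0: "0 < I0"
    unfolding I0_def by (rule moment_pos_if_ge_linear[OF L continuous_on_id zero_less_one]) simp
  define P where "P n p \<longleftrightarrow> (\<forall>x\<in>{0..L}. fst p * iterate L (\<lambda>x. x) n x \<le> iterate L (\<lambda>x. x) (Suc n) x
      \<and> iterate L (\<lambda>x. x) (Suc n) x \<le> snd p * iterate L (\<lambda>x. x) n x) \<and> snd p - fst p = (M - m) * I0 * q ^ n
      \<and> m * I0 \<le> fst p" for n p
  have "\<exists>ab. \<forall>n. P n (ab n) \<and> fst (ab n) \<le> fst (ab (Suc n)) \<and> snd (ab (Suc n)) \<le> snd (ab n)"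
  proof (rule dependent_nat_choice)
    have "\<forall>x\<in>{0..L}. m * I0 * x \<le> iterate L (\<lambda>x. x) 1 x \<and> iterate L (\<lambda>x. x) 1 x \<le> M * I0 * x"
      using H_ge_moment[OF m(2) continuous_on_id] H_le_moment[OF M(2) continuous_on_id]
      by (simp add: I0_def mult_ac)
    then show "\<exists>p. P 0 p"
      by (intro exI[of _ "(m * I0, M * I0)"]) (simp add: P_def algebra_simps)
  next
    fix p n assume Pn: "P n p"
    obtain \<alpha>' \<beta>' where step: "fst p \<le> \<alpha>'" "\<beta>' \<le> snd p" "\<beta>' - \<alpha>' = (snd p - fst p) * q"
      "\<forall>x\<in>{0..L}. \<alpha>' * iterate L (\<lambda>x. x) (Suc n) x \<le> iterate L (\<lambda>x. x) (Suc (Suc n)) x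
         \<and> iterate L (\<lambda>x. x) (Suc (Suc n)) x \<le> \<beta>' * iterate L (\<lambda>x. x) (Suc n) x"
      using H_ratio_contraction[OF m(2) less_imp_le[OF m(1)] M(2,1) continuous_on_iterate_id[of L "Suc n"]
          continuous_on_iterate_id[of L n] iterate_id_nonneg iterate_id_moment_pos[OF L], where \<alpha> = "fst p" and \<beta> = "snd p"] Pn
      unfolding P_def q_def by auto
    then have "P (Suc n) (\<alpha>', \<beta>')"
      using Pn unfolding P_def by (simp add: mult_ac)
    with step show "\<exists>p'. P (Suc n) p' \<and> fst p \<le> fst p' \<and> snd p' \<le> snd p"
      by (intro exI[of _ "(\<alpha>', \<beta>')"]) simp
  qed
  then obtain ab where ab: "\<And>n. P n (ab n)" "\<And>n. fst (ab n) \<le> fst (ab (Suc n))"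
    "\<And>n. snd (ab (Suc n)) \<le> snd (ab n)"
    by blast
  have "0 < fst (ab 0)"
    using ab(1)[of 0] mult_pos_pos[OF m(1) I0] unfolding P_def by linarith
  show thesis
    by (rule that[of q "\<lambda>n. fst (ab n)" "\<lambda>n. snd (ab n)" "(M - m) * I0"])
       (use q ab \<open>0 < fst (ab 0)\<close> in \<open>auto simp: P_def intro: incseq_SucI decseq_SucI\<close>)
qed

definition normalized_iterate :: "real \<Rightarrow> nat \<Rightarrow> real \<Rightarrow> real" where
  "normalized_iterate L n x = iterate L (\<lambda>x. x) n x / iterate L (\<lambda>x. x) n L"

lemma continuous_on_normalized_iterate: "continuous_on {0..L} (normalized_iterate L n)"
  unfolding normalized_iterate_def divide_inverse
  by (intro continuous_intros continuous_on_iterate_id)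

lemma normalized_iterate_bounded:
  assumes L: "0 < L"
  shows "\<exists>B. \<forall>n. \<forall>x\<in>{0..L}. normalized_iterate L n x \<le> B"
proof -
  obtain m where m: "0 < m" "\<forall>x\<in>{0..L}. \<forall>y\<in>{0..L}. m * x * y \<le> kernel x y"
    using kernel_lower_bound[OF L] by blast
  obtain M where M: "0 < M" "\<forall>x\<in>{0..L}. \<forall>y\<in>{0..L}. kernel x y \<le> M * x * y"
    using kernel_upper_bound by blast
  have "normalized_iterate L n x \<le> max 1 (M / m)" if x: "x \<in> {0..L}" for n x
  proof (cases n)
    case 0
    have "x / L \<le> 1" using x L by simp
    then show ?thesis using 0 by (simp add: normalized_iterate_def)
  next
    case (Suc k)
    define I where "I = integral {0..L} (\<lambda>y. y * iterate L (\<lambda>x. x) k y)"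
    have I: "0 < I"
      unfolding I_def by (rule iterate_id_moment_pos[OF L])
    have "iterate L (\<lambda>x. x) n x \<le> M * x * I"
      unfolding Suc I_def iterate_Suc by (rule H_le_moment[OF M(2) continuous_on_iterate_id iterate_id_nonneg x])
    also have "\<dots> \<le> M * L * I"
      using M(1) I x by (intro mult_right_mono mult_left_mono) auto
    finally have upper: "iterate L (\<lambda>x. x) n x \<le> M * L * I" .
    have lower: "m * L * I \<le> iterate L (\<lambda>x. x) n L"
      unfolding Suc I_def iterate_Suc by (rule H_ge_moment[OF m(2) continuous_on_iterate_id iterate_id_nonneg]) (use L in auto)
    have "0 < m * L * I" using m(1) L I by simp
    then have "iterate L (\<lambda>x. x) n x / iterate L (\<lambda>x. x) n L \<le> M * L * I / (m * L * I)"
      using upper lower iterate_id_nonneg[OF x] M(1) L I by (intro frac_le) auto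
    also have "\<dots> = M / m"
      using L I by simp
    finally show ?thesis
      by (simp add: normalized_iterate_def)
  qed
  then show ?thesis by blast
qed

text \<open>
  The ratio bounds give \<open>|v\<^sub>n\<^sub>+\<^sub>1 - v\<^sub>n| = O(q\<^sup>n)\<close> for the iterates \<open>v\<^sub>n\<close> normalised to 1 at \<open>L\<close>;
  their uniform limit is an eigenfunction for the eigenvalue \<open>lim \<alpha>\<^sub>n\<close>.
\<close>

lemma exists_eigenpair:
  assumes L: "0 < L"
  shows "\<exists>e w. eigenpair L e w"
proof -
  obtain \<alpha> \<beta> :: "nat \<Rightarrow> real" and D q where q: "0 \<le> q" "q < 1" and \<alpha>0: "0 < \<alpha> 0"
    and mono: "incseq \<alpha>" "decseq \<beta>" and gap: "\<And>n. \<beta> n - \<alpha> n = D * q ^ n"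
    and ratio: "\<And>n x. x \<in> {0..L} \<Longrightarrow> \<alpha> n * iterate L (\<lambda>x. x) n x \<le> iterate L (\<lambda>x. x) (Suc n) x
        \<and> iterate L (\<lambda>x. x) (Suc n) x \<le> \<beta> n * iterate L (\<lambda>x. x) n x"
    using iterate_ratio_bounds[OF L] by metis
  obtain B where B: "\<And>n x. x \<in> {0..L} \<Longrightarrow> normalized_iterate L n x \<le> B"
    using normalized_iterate_bounded[OF L] by blast
  have L_in: "L \<in> {0..L}" using L by simp
  have u_L: "0 < iterate L (\<lambda>x. x) n L" for n
    using iterate_id_pos[OF L] L by simp
  define r where "r n = iterate L (\<lambda>x. x) (Suc n) L / iterate L (\<lambda>x. x) n L" for n
  have r: "\<alpha> n \<le> r n" "r n \<le> \<beta> n" for n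
    using ratio[OF L_in, of n] u_L[of n] by (auto simp: r_def field_simps)
  have \<alpha>_ge: "\<alpha> 0 \<le> \<alpha> n" for n
    using mono(1) by (simp add: incseq_def)
  have "\<alpha> n \<le> \<beta> 0" for n
  proof -
    have "\<beta> n \<le> \<beta> 0" using mono(2) by (simp add: decseq_def)
    then show ?thesis using r[of n] by linarith
  qed
  then obtain e where \<alpha>_lim: "\<alpha> \<longlonglongrightarrow> e"
    using incseq_convergent[OF mono(1)] by blast
  have "\<beta> = (\<lambda>n. \<alpha> n + D * q ^ n)"
    using gap by (auto simp: algebra_simps)
  moreover have "(\<lambda>n. \<alpha> n + D * q ^ n) \<longlonglongrightarrow> e + D * 0"
    using q by (intro tendsto_intros \<alpha>_lim LIMSEQ_power_zero) auto
  ultimately have "\<beta> \<longlonglongrightarrow> e" by simp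
  then have r_lim: "r \<longlonglongrightarrow> e"
    using \<alpha>_lim r by (intro tendsto_sandwich[of \<alpha> r sequentially \<beta>]) auto
  let ?v = "normalized_iterate L"
  have v_nonneg: "0 \<le> ?v n x" if "x \<in> {0..L}" for n x
    using iterate_id_nonneg[OF that] u_L[of n] by (simp add: normalized_iterate_def)
  have "\<bar>?v (Suc n) x - ?v n x\<bar> \<le> D * B / \<alpha> 0 * q ^ n" if x: "x \<in> {0..L}" for n x
  proof -
    have \<alpha>_pos: "0 < \<alpha> n" using \<alpha>0 \<alpha>_ge[of n] by linarith
    have gap_nonneg: "0 \<le> \<beta> n - \<alpha> n" using r[of n] by linarith
    have "\<bar>?v (Suc n) x - ?v n x\<bar> \<le> (\<beta> n - \<alpha> n) / \<alpha> n * ?v n x"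
      unfolding normalized_iterate_def
      using ratio[OF x, of n] ratio[OF L_in, of n] \<alpha>_pos u_L[of n] iterate_id_nonneg[OF x, of n]
      by (intro ratio_sandwich_diff) auto
    also have "\<dots> \<le> (\<beta> n - \<alpha> n) / \<alpha> 0 * B"
    proof (rule mult_mono)
      show "(\<beta> n - \<alpha> n) / \<alpha> n \<le> (\<beta> n - \<alpha> n) / \<alpha> 0"
        using \<alpha>0 \<alpha>_ge[of n] gap_nonneg by (intro divide_left_mono) auto
      show "0 \<le> (\<beta> n - \<alpha> n) / \<alpha> 0"
        using \<alpha>0 gap_nonneg by simp
    qed (use v_nonneg[OF x, of n] B[OF x, of n] in auto)
    finally show ?thesis
      by (simp add: gap mult_ac)
  qed
  then obtain w where lim: "uniform_limit {0..L} ?v w sequentially"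
    using uniformly_convergent_geometric_steps[OF _ q] unfolding uniformly_convergent_on_def by blast
  have pointwise: "(\<lambda>n. ?v n x) \<longlonglongrightarrow> w x" if "x \<in> {0..L}" for x
    using tendsto_uniform_limitI[OF lim that] .
  have "eigenpair L e w"
    unfolding eigenpair_def
  proof (intro conjI ballI)
    show "continuous_on {0..L} w"
      by (rule uniform_limit_theorem[OF _ lim]) (simp_all add: continuous_on_normalized_iterate)
    show "w 0 = 0"
      using pointwise[of 0] L by (simp add: normalized_iterate_def LIMSEQ_const_iff)
    have "?v n L = 1" for n
      using u_L[of n] by (simp add: normalized_iterate_def)
    then have "w L = 1"
      using pointwise[OF L_in] by (simp add: LIMSEQ_const_iff)
    then show "\<exists>x\<in>{0..L}. w x \<noteq> 0"
      using L_in by force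
    fix x assume x: "x \<in> {0..L}"
    show "0 \<le> w x"
      by (rule LIMSEQ_le_const[OF pointwise[OF x]]) (use v_nonneg x in auto)
    have "H L (?v n) x = r n * ?v (Suc n) x" for n
    proof -
      have "?v n = (\<lambda>y. inverse (iterate L (\<lambda>x. x) n L) * iterate L (\<lambda>x. x) n y)"
        by (simp add: normalized_iterate_def fun_eq_iff field_simps)
      then have "H L (?v n) x = inverse (iterate L (\<lambda>x. x) n L) * iterate L (\<lambda>x. x) (Suc n) x"
        by (simp only: H_cmult iterate_Suc)
      then show ?thesis
        using u_L[of n] u_L[of "Suc n"] by (simp add: r_def normalized_iterate_def field_simps)
    qed
    moreover have "(\<lambda>n. r n * ?v (Suc n) x) \<longlonglongrightarrow> e * w x"
      using r_lim LIMSEQ_Suc[OF pointwise[OF x]] by (rule tendsto_mult)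
    ultimately have "(\<lambda>n. H L (?v n) x) \<longlonglongrightarrow> e * w x"
      by simp
    moreover have "(\<lambda>n. H L (?v n) x) \<longlonglongrightarrow> H L w x"
      by (rule tendsto_H_uniform_limit[OF lim continuous_on_normalized_iterate])
    ultimately show "e * w x = H L w x"
      by (rule LIMSEQ_unique)
  qed
  then show ?thesis by blast
qed

section \<open>The principal eigenvalue as a function of \<open>L\<close>\<close>

lemma eps_eq_eigenvalue:
  assumes L: "0 < L" and u: "eigenpair L e u"
  shows "eps G L = e"
proof -
  have "(THE e. pos_eigenvalue G L e) = e"
  proof (rule the_equality)
    show "pos_eigenvalue G L e"
      by (rule eigenpair_imp_pos_eigenvalue[OF assms])
  next
    fix e' assume "pos_eigenvalue G L e'"
    then obtain v where "eigenpair L e' v"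
      using pos_eigenvalue_imp_eigenpair by blast
    then show "e' = e"
      by (rule eigenvalue_unique[OF L _ u])
  qed
  then show ?thesis
    using L by (simp add: eps_def)
qed

lemma eps_eigenpair:
  assumes "0 < L"
  obtains u where "eigenpair L (eps G L) u"
  using exists_eigenpair[OF assms] eps_eq_eigenvalue[OF assms] by metis

lemma ex1_pos_eigenvalue:
  assumes L: "0 < L"
  shows "\<exists>!e. pos_eigenvalue G L e"
proof (rule ex1I)
  obtain u where u: "eigenpair L (eps G L) u"
    using eps_eigenpair[OF L] .
  then show "pos_eigenvalue G L (eps G L)"
    by (rule eigenpair_imp_pos_eigenvalue[OF L])
  fix e assume "pos_eigenvalue G L e"
  then obtain v where "eigenpair L e v"
    using pos_eigenvalue_imp_eigenpair by blast
  then show "e = eps G L"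
    by (rule eigenvalue_unique[OF L _ u])
qed

lemma strict_mono_on_eps: "strict_mono_on {0..} (eps G)"
proof (rule strict_mono_onI)
  fix r s :: real assume rs: "r \<in> {0..}" "s \<in> {0..}" "r < s"
  then have s: "0 < s" by simp
  obtain v where v: "eigenpair s (eps G s) v"
    using eps_eigenpair[OF s] .
  show "eps G r < eps G s"
  proof (cases "r = 0")
    case True
    then show ?thesis
      using eigenvalue_pos[OF s v] by (simp add: eps_def)
  next
    case False
    then have r: "0 < r" using rs by simp
    obtain u where u: "eigenpair r (eps G r) u"
      using eps_eigenpair[OF r] .
    show ?thesis
      by (rule eigenvalue_strict_mono[OF r rs(3) u v])
  qed
qed

lemma integral_iterate_shift:
  assumes f: "continuous_on {0..L} f"
  shows "integral {0..L} (\<lambda>x. iterate L f (k + j) x * iterate L f i x)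
    = integral {0..L} (\<lambda>x. iterate L f j x * iterate L f (k + i) x)"
proof (induction k arbitrary: i j)
  case 0
  then show ?case by (simp add: mult.commute)
next
  case (Suc k)
  have "integral {0..L} (\<lambda>x. iterate L f (Suc k + j) x * iterate L f i x)
      = integral {0..L} (\<lambda>x. iterate L f (Suc j) x * iterate L f (k + i) x)"
    using Suc[of "Suc j" i] by simp
  also have "\<dots> = integral {0..L} (\<lambda>x. iterate L f j x * iterate L f (Suc (k + i)) x)"
    using H_symmetric[OF continuous_on_iterate[OF f] continuous_on_iterate[OF f]] by simp
  finally show ?case by simp
qed

lemma integral_iterate_one_square_le:
  assumes L: "0 \<le> L"
  shows "(integral {0..L} (iterate L (\<lambda>_. 1) n))\<^sup>2 \<le> L * integral {0..L} (iterate L (\<lambda>_. 1) (2 * n))"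
proof -
  have one: "continuous_on {0..L} (\<lambda>_::real. 1::real)"
    by (rule continuous_on_const)
  have "(integral {0..L} (iterate L (\<lambda>_. 1) n))\<^sup>2 \<le> L * integral {0..L} (\<lambda>x. (iterate L (\<lambda>_. 1) n x)\<^sup>2)"
    using power2_integral_le[OF continuous_on_iterate[OF one] L] by simp
  also have "integral {0..L} (\<lambda>x. (iterate L (\<lambda>_. 1) n x)\<^sup>2)
      = integral {0..L} (\<lambda>x. iterate L (\<lambda>_. 1) (n + n) x * iterate L (\<lambda>_. 1) 0 x)"
    using integral_iterate_shift[OF one, of n n 0] by (simp add: power2_eq_square)
  finally show ?thesis
    by (simp add: mult_2)
qed

lemma iterate_le_eigenfunction:
  assumes L: "0 < L" and u: "eigenpair L e u"
    and f: "continuous_on {0..L} f" "\<And>y. y \<in> {0..L} \<Longrightarrow> 0 \<le> f y"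
  shows "\<exists>A. \<forall>n. \<forall>x\<in>{0..L}. iterate L f (Suc n) x \<le> A * e ^ n * u x"
proof -
  obtain M where M: "0 < M" "\<forall>x\<in>{0..L}. \<forall>y\<in>{0..L}. kernel x y \<le> M * x * y"
    using kernel_upper_bound by blast
  obtain c where c: "0 < c" "\<forall>x\<in>{0..L}. c * x \<le> u x"
    using eigenfunction_ge_linear[OF L u] by blast
  define A where "A = M * integral {0..L} (\<lambda>y. y * f y) / c"
  have "0 \<le> integral {0..L} (\<lambda>y. y * f y)"
    using f by (intro integral_nonneg integrable_continuous_interval continuous_intros) auto
  then have A: "0 \<le> A"
    unfolding A_def using M(1) c(1) by simp
  have uc: "continuous_on {0..L} u"
    using u by (simp add: eigenpair_def)
  have "iterate L f (Suc n) x \<le> A * e ^ n * u x" if "x \<in> {0..L}" for n x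
    using that
  proof (induction n arbitrary: x)
    case 0
    have "iterate L f 1 x \<le> M * x * integral {0..L} (\<lambda>y. y * f y)"
      using H_le_moment[OF M(2) f 0] by simp
    also have "\<dots> = A * (c * x)"
      using c(1) by (simp add: A_def)
    also have "\<dots> \<le> A * u x"
      using c(2) 0 A by (intro mult_left_mono) auto
    finally show ?case by simp
  next
    case (Suc n)
    have "iterate L f (Suc (Suc n)) x \<le> H L (\<lambda>y. A * e ^ n * u y) x"
      unfolding iterate_Suc[of L f "Suc n"]
      by (rule H_mono) (use Suc continuous_on_iterate[OF f(1), of "Suc n"] uc in \<open>auto intro!: continuous_intros\<close>)
    also have "\<dots> = A * e ^ n * (e * u x)"
      using u Suc.prems by (simp only: H_cmult) (simp add: eigenpair_def)
    also have "\<dots> = A * e ^ Suc n * u x"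
      by (simp add: mult_ac)
    finally show ?case .
  qed
  then show ?thesis by blast
qed

text \<open>
  With \<open>a\<^sub>n = \<integral>\<^sub>0\<^sup>L \<H>\<^sub>L\<^sup>n[1]\<close>, symmetry and Cauchy--Schwarz give \<open>a\<^sub>n\<^sup>2 \<le> L a\<^sub>2\<^sub>n\<close>, hence
  \<open>a\<^bsub>2^k\<^esub> \<ge> L r\<^bsup>2^k\<^esup>\<close> with \<open>r = a\<^sub>1 / L\<close>; comparison with the eigenfunction gives
  \<open>a\<^sub>n\<^sub>+\<^sub>1 = O(e\<^sup>n)\<close>. Both together force \<open>r \<le> e\<close>.
\<close>

lemma eigenvalue_ge_mean_H_one:
  assumes L: "0 < L" and u: "eigenpair L e u"
  shows "integral {0..L} (H L (\<lambda>_. 1)) / L \<le> e"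
proof (rule ccontr)
  define a where "a n = integral {0..L} (iterate L (\<lambda>_. 1) n)" for n
  define r where "r = a 1 / L"
  assume "\<not> ?thesis"
  then have r_gt: "e < r"
    by (simp add: r_def a_def)
  have e: "0 < e" by (rule eigenvalue_pos[OF L u])
  have r: "0 < r" using r_gt e by simp
  have a_doubling: "L * r ^ (2 ^ k) \<le> a (2 ^ k)" for k
  proof (induction k)
    case 0
    then show ?case using L by (simp add: r_def)
  next
    case (Suc k)
    have "L * (L * r ^ (2 ^ Suc k)) = (L * r ^ (2 ^ k))\<^sup>2"
      by (simp add: power_Suc2 power_mult power_mult_distrib power2_eq_square)
    also have "\<dots> \<le> (a (2 ^ k))\<^sup>2"
      using Suc L r by (intro power_mono) auto
    also have "\<dots> \<le> L * a (2 ^ Suc k)"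
      unfolding a_def using integral_iterate_one_square_le[of L "2 ^ k"] L by simp
    finally show ?case
      using L by simp
  qed
  obtain A where A: "\<forall>n. \<forall>x\<in>{0..L}. iterate L (\<lambda>_. 1) (Suc n) x \<le> A * e ^ n * u x"
    using iterate_le_eigenfunction[of L e u "\<lambda>_. 1"] L u by auto
  define A' where "A' = A * integral {0..L} u"
  have a_upper: "a (Suc n) \<le> A' * e ^ n" for n
  proof -
    have "a (Suc n) \<le> integral {0..L} (\<lambda>x. A * e ^ n * u x)"
      unfolding a_def using A u
      by (intro integral_le integrable_continuous_interval continuous_on_iterate continuous_intros)
         (auto simp: eigenpair_def)
    then show ?thesis by (simp add: A'_def mult_ac)
  qed
  define \<rho> where "\<rho> = r / e"
  have \<rho>: "1 < \<rho>" using r_gt e by (simp add: \<rho>_def)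
  obtain k where k: "A' / (L * e) < \<rho> ^ k"
    using real_arch_pow[OF \<rho>] by blast
  obtain N where N: "2 ^ k = Suc N"
    using not0_implies_Suc[of "2 ^ k"] by auto
  have "L * e * \<rho> ^ Suc N * e ^ N = L * r ^ Suc N"
    using e by (simp add: \<rho>_def power_divide field_simps)
  also have "\<dots> \<le> A' * e ^ N"
    using a_doubling[of k] a_upper[of N] unfolding N by linarith
  finally have "\<rho> ^ Suc N \<le> A' / (L * e)"
    using L e by (simp add: field_simps)
  moreover have "\<rho> ^ k \<le> \<rho> ^ Suc N"
    using \<rho> N less_exp[of k] by (intro power_increasing) auto
  ultimately show False
    using k by linarith
qed

end

section \<open>Unit mass: the limit \<open>L \<rightarrow> \<infinity>\<close>\<close>

locale radial_density = radial_kernel +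
  assumes G_nonneg: "\<And>x. 0 \<le> G x"
    and G_has_integral: "(G has_integral 1) UNIV"
begin

lemma integrable_on_G: "G integrable_on {a..b}"
  by (rule integrable_continuous_interval[OF continuous_G])

lemma integral_G_le_1: "integral {a..b} G \<le> 1"
proof -
  have "integral {a..b} G \<le> integral UNIV G"
    by (rule integral_subset_le) (use integrable_on_G G_has_integral G_nonneg in auto)
  then show ?thesis
    by (simp add: integral_unique[OF G_has_integral])
qed

lemma H_one: "H L (\<lambda>_. 1) x = integral {x - L..x} G - integral {x..x + L} G"
proof -
  have "integral {0..L} (\<lambda>y. G (x - y)) = integral {x - L..x} G"
    using Henstock_Kurzweil_Integration.integral_reflect_real[of 0 "- L" "\<lambda>z. G (x + z)"] integral_shift_Icc_real[of "- L" 0 G x]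
    by (simp add: o_def)
  moreover have "integral {0..L} (\<lambda>y. G (x + y)) = integral {x..x + L} G"
    using integral_shift_Icc_real[of 0 L G x] by (simp add: o_def add.commute)
  moreover have "integral {0..L} (\<lambda>y. G (x - y) - G (x + y))
      = integral {0..L} (\<lambda>y. G (x - y)) - integral {0..L} (\<lambda>y. G (x + y))"
    by (intro integral_diff integrable_continuous_interval continuous_on_compose2[OF continuous_G]
        continuous_intros) auto
  ultimately show ?thesis
    by (simp add: H_op_def)
qed

lemma H_one_le_1: "H L (\<lambda>_. 1) x \<le> 1"
  using H_one[of L x] integral_G_le_1[of "x - L" x]
    integral_nonneg[OF integrable_on_G G_nonneg, of x "x + L"] by linarith

lemma eigenvalue_le_1:
  assumes L: "0 < L" and u: "eigenpair L e u"
  shows "e \<le> 1"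
proof -
  have uc: "continuous_on {0..L} u" and u_nonneg: "\<forall>x\<in>{0..L}. 0 \<le> u x"
    using u by (auto simp: eigenpair_def)
  obtain z where z: "z \<in> {0..L}" "\<And>y. y \<in> {0..L} \<Longrightarrow> u y \<le> u z"
    using continuous_attains_sup[OF _ _ uc] L by auto
  obtain x0 where x0: "x0 \<in> {0..L}" "0 < x0" "0 < u x0"
    using eigenfunction_pos_point[OF u] .
  have uz: "0 < u z"
    using z(2)[OF x0(1)] x0(3) by linarith
  have "e * u z = H L u z"
    using u z(1) by (simp add: eigenpair_def)
  also have "\<dots> \<le> H L (\<lambda>_. u z) z"
    using uc z by (intro H_mono) auto
  also have "\<dots> = u z * H L (\<lambda>_. 1) z"
    using H_cmult[of L "u z" "\<lambda>_. 1" z] by simp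
  also have "\<dots> \<le> u z * 1"
    using uz H_one_le_1 by (intro mult_left_mono) auto
  finally show ?thesis
    using uz by simp
qed

lemma integral_G_symmetric_gt:
  assumes "0 < \<delta>"
  shows "\<exists>R>0. 1 - \<delta> < integral {-R..R} G"
proof -
  obtain B where B: "0 < B" "\<And>a b. ball 0 B \<subseteq> cbox a b \<Longrightarrow>
      norm (integral (cbox a b) (\<lambda>x. if x \<in> UNIV then G x else 0) - 1) < \<delta>"
    using G_has_integral assms unfolding has_integral_alt' by force
  have "ball 0 B \<subseteq> cbox (- B) B"
    by (auto simp: dist_real_def)
  then have "norm (integral {- B..B} G - 1) < \<delta>"
    using B(2) by (simp add: cbox_interval)
  then show ?thesis
    using B(1) by (intro exI[of _ B]) auto
qed

lemma H_one_ge_inside: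
  assumes R: "0 \<le> R" "1 - \<delta> < integral {-R..R} G" and x: "x \<in> {R..L - R}"
  shows "1 - 2 * \<delta> \<le> H L (\<lambda>_. 1) x"
proof -
  have "integral {-R..R} G \<le> integral {x - L..x} G"
    by (rule integral_subset_le) (use x integrable_on_G G_nonneg in auto)
  moreover have "integral {x..x + L} G \<le> integral {R..x + L} G"
    by (rule integral_subset_le) (use x integrable_on_G G_nonneg in auto)
  moreover have "integral {-R..R} G + integral {R..x + L} G = integral {-R..x + L} G"
    by (rule Henstock_Kurzweil_Integration.integral_combine) (use x R integrable_on_G in auto)
  moreover have "integral {-R..x + L} G \<le> 1"
    by (rule integral_G_le_1)
  ultimately show ?thesis
    unfolding H_one using R by linarith
qed

lemma mean_H_one_ge:
  assumes "0 < \<delta>" and R: "0 < R" "1 - \<delta> < integral {-R..R} G" and L: "2 * R < L"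
  shows "1 - 2 * \<delta> - 2 * R / L \<le> integral {0..L} (H L (\<lambda>_. 1)) / L"
proof -
  have sub: "{R..L - R} \<subseteq> {0..L}"
    using R by auto
  have cont: "continuous_on {0..L} (H L (\<lambda>_. 1))"
    by (intro continuous_on_H continuous_intros)
  have "(L - 2 * R) * (1 - 2 * \<delta>) = integral {R..L - R} (\<lambda>_. 1 - 2 * \<delta>)"
    using L by simp
  also have "\<dots> \<le> integral {R..L - R} (H L (\<lambda>_. 1))"
    using H_one_ge_inside[OF less_imp_le[OF R(1)] R(2)] continuous_on_subset[OF cont sub]
    by (intro integral_le integrable_continuous_interval) auto
  also have "\<dots> \<le> integral {0..L} (H L (\<lambda>_. 1))"
    using sub continuous_on_subset[OF cont sub] cont H_nonneg[of L "\<lambda>_. 1"]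
    by (intro integral_subset_le integrable_continuous_interval) auto
  finally have "(L - 2 * R) * (1 - 2 * \<delta>) / L \<le> integral {0..L} (H L (\<lambda>_. 1)) / L"
    using L R by (intro divide_right_mono) auto
  moreover have "1 - 2 * \<delta> - 2 * R / L \<le> (L - 2 * R) * (1 - 2 * \<delta>) / L"
    using L R assms(1) by (simp add: field_simps)
  ultimately show ?thesis by linarith
qed

lemma tendsto_mean_H_one: "((\<lambda>L. integral {0..L} (H L (\<lambda>_. 1)) / L) \<longlongrightarrow> 1) at_top"
proof (rule tendstoI)
  fix \<epsilon> :: real assume \<epsilon>: "0 < \<epsilon>"
  obtain R where R: "0 < R" "1 - \<epsilon> / 4 < integral {-R..R} G"
    using integral_G_symmetric_gt[of "\<epsilon> / 4"] \<epsilon> by auto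
  have close: "dist (integral {0..L} (H L (\<lambda>_. 1)) / L) 1 < \<epsilon>" if L: "4 * R / \<epsilon> + 2 * R < L" for L
  proof -
    have "0 < 4 * R / \<epsilon>" using R \<epsilon> by simp
    then have L_pos: "0 < L" "2 * R < L" using L R by linarith+
    have "4 * R / \<epsilon> < L" using L R by linarith
    then have "2 * R / L < \<epsilon> / 2" using L_pos \<epsilon> by (simp add: field_simps)
    moreover have "1 - 2 * (\<epsilon> / 4) - 2 * R / L \<le> integral {0..L} (H L (\<lambda>_. 1)) / L"
      using mean_H_one_ge[OF _ R L_pos(2)] \<epsilon> by simp
    moreover have "integral {0..L} (H L (\<lambda>_. 1)) \<le> integral {0..L} (\<lambda>_. 1)"
      using H_one_le_1 by (intro integral_le integrable_continuous_interval continuous_on_H continuous_intros) auto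
    then have "integral {0..L} (H L (\<lambda>_. 1)) / L \<le> 1"
      using L_pos by simp
    ultimately show ?thesis
      by (simp add: dist_real_def abs_if)
  qed
  show "\<forall>\<^sub>F L in at_top. dist (integral {0..L} (H L (\<lambda>_. 1)) / L) 1 < \<epsilon>"
    by (rule eventually_mono[OF eventually_gt_at_top close])
qed

lemma tendsto_eps: "(eps G \<longlongrightarrow> 1) at_top"
proof (rule tendsto_sandwich[OF _ _ tendsto_mean_H_one tendsto_const])
  have bounds: "integral {0..L} (H L (\<lambda>_. 1)) / L \<le> eps G L \<and> eps G L \<le> 1" if "0 < L" for L
    using eps_eigenpair[OF that] eigenvalue_ge_mean_H_one[OF that] eigenvalue_le_1[OF that] by metis
  show "\<forall>\<^sub>F L in at_top. integral {0..L} (H L (\<lambda>_. 1)) / L \<le> eps G L"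
    "\<forall>\<^sub>F L in at_top. eps G L \<le> 1"
    using eventually_gt_at_top[of 0] by (eventually_elim, use bounds in blast)+
qed

end

theorem proposition4p12:
  fixes G g :: "real \<Rightarrow> real"
  assumes G_nonneg: "\<forall>x. G x \<ge> 0"
    and G_supp: "closure {x. G x \<noteq> 0} = UNIV"
    and G_W11: "integrable lborel G" "integrable lborel (deriv G)"
    and G_Linf: "bounded (range G)"
    and G_C2: "\<forall>x. G differentiable (at x)" "\<forall>x. (deriv G) differentiable (at x)"
      "continuous_on UNIV (deriv (deriv G))"
    and G_radial: "\<forall>x. G x = g \<bar>x\<bar>"
    and g_decr: "\<forall>r>0. (g has_real_derivative deriv g r) (at r) \<and> deriv g r < 0"
    and g2_0: "deriv (deriv G) 0 < 0"
    and g_lim: "(g \<longlongrightarrow> 0) at_top"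
    and G_mass: "(LINT x|lborel. G x) = 1"
  shows "(\<forall>L>0. \<exists>!e. pos_eigenvalue G L e)
         \<and> strict_mono_on {0..} (eps G)
         \<and> ((eps G \<longlongrightarrow> 1) at_top)
         \<and> eps G 0 = 0"
proof -
  have G_deriv: "(G has_real_derivative deriv G x) (at x)" for x
    using G_C2(1) DERIV_deriv_iff_real_differentiable by blast
  have G'_deriv: "(deriv G has_real_derivative deriv (deriv G) x) (at x)" for x
    using G_C2(2) DERIV_deriv_iff_real_differentiable by blast
  have "deriv G x < 0" if "0 < x" for x
    using g_decr that DERIV_unique[OF G_deriv has_real_derivative_radial[OF G_radial]] by force
  moreover have "(G has_integral 1) UNIV"
    using has_integral_integral_lborel[OF G_W11(1)] G_mass by simp
  ultimately interpret radial_density G "deriv G" "deriv (deriv G)"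
    using G_radial G_deriv G'_deriv G_C2(3) g2_0 G_nonneg by unfold_locales auto
  show ?thesis
    using ex1_pos_eigenvalue strict_mono_on_eps tendsto_eps by (simp add: eps_def)
qed

end
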